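(* Let $S$ be a multiplicatively closed subset of $R$, $I$ an ideal of $R$, and $M$ an $R$-module. (a) If $S^{-1}I\subseteq W_{S^{-1}R}(S^{-1}M)$, then $I\subseteq W_R(M)$. (b) If $Z_R(M)\cap S=\emptyset$, $W_R(M)\cap S=\emptyset$, and $I\subseteq W_R(M)$, then $S^{-1}I\subseteq W_{S^{-1}R}(S^{-1}M)$. (c) If $M$ is Hopfian, $W_R(M)\cap S=\emptyset$, and $I\subseteq W_R(M)$, then $S^{-1}I\subseteq W_{S^{-1}R}(S^{-1}M)$.
   Context: All rings are commutative with identity. For an $R$-module $M$, $W_R(M)=\{r\in R : rM\neq M\}$ and $Z_R(M)=\{r\in R: rm=0 \text{ for some } 0\neq m\in M\}$. $M$ is Hopfian if every surjective endomorphism of $M$ is an isomorphism. *)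

theory Defs
  imports Main "HOL.Modules"
begin

definition is_ideal :: "'a::comm_ring_1 set \<Rightarrow> bool" where
  "is_ideal I \<longleftrightarrow> 0 \<in> I \<and> (\<forall>x\<in>I. \<forall>y\<in>I. x + y \<in> I) \<and> (\<forall>c. \<forall>x\<in>I. c * x \<in> I)"

definition mult_closed :: "'a::comm_ring_1 set \<Rightarrow> bool" where
  "mult_closed S \<longleftrightarrow> 1 \<in> S \<and> (\<forall>s\<in>S. \<forall>t\<in>S. s * t \<in> S)"

definition W_set :: "('a::comm_ring_1 \<Rightarrow> 'b \<Rightarrow> 'b) \<Rightarrow> 'a set" where
  "W_set scale = {r. range (scale r) \<noteq> UNIV}"

definition Z_set :: "('a::comm_ring_1 \<Rightarrow> 'b::zero \<Rightarrow> 'b) \<Rightarrow> 'a set" where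
  "Z_set scale = {r. \<exists>m. m \<noteq> 0 \<and> scale r m = 0}"

definition hopfian :: "('a::comm_ring_1 \<Rightarrow> 'b::ab_group_add \<Rightarrow> 'b) \<Rightarrow> bool" where
  "hopfian scale \<longleftrightarrow> (\<forall>f. module_hom scale scale f \<and> surj f \<longrightarrow> inj f)"

definition loc_rel_ring :: "'a::comm_ring_1 set \<Rightarrow> (('a \<times> 'a) \<times> ('a \<times> 'a)) set" where
  "loc_rel_ring S = {((r, s), (r', s')). s \<in> S \<and> s' \<in> S \<and>
      (\<exists>u\<in>S. u * (r * s' - r' * s) = 0)}"

definition loc_rel_mod :: "('a::comm_ring_1 \<Rightarrow> 'b::ab_group_add \<Rightarrow> 'b) \<Rightarrow> 'a set
    \<Rightarrow> (('b \<times> 'a) \<times> ('b \<times> 'a)) set" where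
  "loc_rel_mod scale S = {((m, s), (m', s')). s \<in> S \<and> s' \<in> S \<and>
      (\<exists>u\<in>S. scale u (scale s' m - scale s m') = 0)}"

definition loc_ring :: "'a::comm_ring_1 set \<Rightarrow> ('a \<times> 'a) set set" where
  "loc_ring S = (UNIV \<times> S) // loc_rel_ring S"

definition loc_mod :: "('a::comm_ring_1 \<Rightarrow> 'b::ab_group_add \<Rightarrow> 'b) \<Rightarrow> 'a set
    \<Rightarrow> ('b \<times> 'a) set set" where
  "loc_mod scale S = (UNIV \<times> S) // loc_rel_mod scale S"

definition frac_ring :: "'a::comm_ring_1 set \<Rightarrow> 'a \<Rightarrow> 'a \<Rightarrow> ('a \<times> 'a) set" where
  "frac_ring S r s = loc_rel_ring S `` {(r, s)}"

definition frac_mod :: "('a::comm_ring_1 \<Rightarrow> 'b::ab_group_add \<Rightarrow> 'b) \<Rightarrow> 'a set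
    \<Rightarrow> 'b \<Rightarrow> 'a \<Rightarrow> ('b \<times> 'a) set" where
  "frac_mod scale S m s = loc_rel_mod scale S `` {(m, s)}"

definition loc_scale :: "('a::comm_ring_1 \<Rightarrow> 'b::ab_group_add \<Rightarrow> 'b) \<Rightarrow> 'a set
    \<Rightarrow> ('a \<times> 'a) set \<Rightarrow> ('b \<times> 'a) set \<Rightarrow> ('b \<times> 'a) set" where
  "loc_scale scale S X Y = (\<Union>(r, t)\<in>X. \<Union>(m, s)\<in>Y. frac_mod scale S (scale r m) (t * s))"

definition loc_ideal :: "'a::comm_ring_1 set \<Rightarrow> 'a set \<Rightarrow> ('a \<times> 'a) set set" where
  "loc_ideal S I = {frac_ring S a s | a s. a \<in> I \<and> s \<in> S}"

definition W_loc :: "('a::comm_ring_1 \<Rightarrow> 'b::ab_group_add \<Rightarrow> 'b) \<Rightarrow> 'a set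
    \<Rightarrow> ('a \<times> 'a) set set" where
  "W_loc scale S = {x \<in> loc_ring S. loc_scale scale S x ` loc_mod scale S \<noteq> loc_mod scale S}"

end

theory Submission
  imports Defs
begin

text \<open>For (a), a surjective multiplication a on M makes a/1 act surjectively on S\<inverse>M, since
  m/s = (a m')/s = (a/1)(m'/s). For (b), if a/s acted surjectively then m/1 = (a m')/(s t) for
  every m, i.e. w m = a (u m') for some w \<in> S; as multiplication by w is bijective on M, this
  forces m \<in> aM. For (c), a Hopfian module has Z(M) \<subseteq> W(M): a surjective multiplication is a
  surjective endomorphism, hence injective.\<close>

context module
begin

lemma loc_rel_mod_iff:
  "((m, s), (m', s')) \<in> loc_rel_mod scale S \<longleftrightarrow>
     s \<in> S \<and> s' \<in> S \<and> (\<exists>u\<in>S. scale (u * s') m = scale (u * s) m')"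
  unfolding loc_rel_mod_def by (auto simp: scale_right_diff_distrib)

lemma equiv_loc_rel_mod:
  assumes S: "mult_closed S"
  shows "equiv (UNIV \<times> S) (loc_rel_mod scale S)"
proof (rule equivI)
  show "loc_rel_mod scale S \<subseteq> (UNIV \<times> S) \<times> (UNIV \<times> S)"
    unfolding loc_rel_mod_def by auto
  show "refl_on (UNIV \<times> S) (loc_rel_mod scale S)"
    using S by (intro refl_onI) (auto simp: loc_rel_mod_iff mult_closed_def)
  show "sym (loc_rel_mod scale S)"
    unfolding sym_def by (auto simp: loc_rel_mod_iff) metis
  show "trans (loc_rel_mod scale S)"
  proof (rule transI, clarify)
    fix m s m' s' m'' s''
    assume "((m, s), (m', s')) \<in> loc_rel_mod scale S" "((m', s'), (m'', s'')) \<in> loc_rel_mod scale S"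
    then obtain u v where uv: "u \<in> S" "v \<in> S" "s \<in> S" "s' \<in> S" "s'' \<in> S"
      and u: "scale (u * s') m = scale (u * s) m'" and v: "scale (v * s'') m' = scale (v * s') m''"
      by (auto simp: loc_rel_mod_iff)
    have "scale (u * v * s' * s'') m = scale (v * s'') (scale (u * s') m)" by (simp add: ac_simps)
    also have "\<dots> = scale (v * s'') (scale (u * s) m')" by (simp only: u)
    also have "\<dots> = scale (u * s) (scale (v * s'') m')" by (rule scale_left_commute)
    also have "\<dots> = scale (u * s) (scale (v * s') m'')" by (simp only: v)
    also have "\<dots> = scale (u * v * s' * s) m''" by (simp add: ac_simps)
    finally show "((m, s), (m'', s'')) \<in> loc_rel_mod scale S"
      using S uv by (auto simp: loc_rel_mod_iff mult_closed_def)
  qed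
qed

lemma frac_mod_eqI:
  "mult_closed S \<Longrightarrow> ((m, s), (m', s')) \<in> loc_rel_mod scale S
    \<Longrightarrow> frac_mod scale S m s = frac_mod scale S m' s'"
  unfolding frac_mod_def by (rule equiv_class_eq[OF equiv_loc_rel_mod])

lemma frac_mod_in_loc_mod: "s \<in> S \<Longrightarrow> frac_mod scale S m s \<in> loc_mod scale S"
  unfolding frac_mod_def loc_mod_def by (auto intro: quotientI)

lemma mem_frac_mod_self: "mult_closed S \<Longrightarrow> s \<in> S \<Longrightarrow> (m, s) \<in> frac_mod scale S m s"
  unfolding frac_mod_def by (auto simp: loc_rel_mod_iff mult_closed_def)

lemma loc_mod_cases:
  assumes "Y \<in> loc_mod scale S"
  obtains m s where "s \<in> S" "Y = frac_mod scale S m s"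
  using assms unfolding loc_mod_def frac_mod_def by (auto elim!: quotientE)

lemma frac_ring_in_loc_ring: "s \<in> S \<Longrightarrow> frac_ring S r s \<in> loc_ring S"
  unfolding frac_ring_def loc_ring_def by (auto intro: quotientI)

lemma loc_scale_frac:
  assumes S: "mult_closed S" and t: "t \<in> S" and s: "s \<in> S"
  shows "loc_scale scale S (frac_ring S r t) (frac_mod scale S m s)
       = frac_mod scale S (scale r m) (t * s)"
proof
  have "(r, t) \<in> frac_ring S r t" using t unfolding frac_ring_def loc_rel_ring_def by auto
  with mem_frac_mod_self[OF S s]
  show "frac_mod scale S (scale r m) (t * s)
      \<subseteq> loc_scale scale S (frac_ring S r t) (frac_mod scale S m s)"
    unfolding loc_scale_def by blast
next
  show "loc_scale scale S (frac_ring S r t) (frac_mod scale S m s)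
      \<subseteq> frac_mod scale S (scale r m) (t * s)"
    unfolding loc_scale_def
  proof clarify
    fix x r' t' m' s'
    assume "(r', t') \<in> frac_ring S r t" "(m', s') \<in> frac_mod scale S m s"
      and x: "x \<in> frac_mod scale S (scale r' m') (t' * s')"
    then obtain u v where uv: "u \<in> S" "v \<in> S" "t' \<in> S" "s' \<in> S"
      and u: "u * r * t' = u * r' * t" and v: "scale (v * s') m = scale (v * s) m'"
      unfolding frac_ring_def loc_rel_ring_def frac_mod_def
      by (auto simp: loc_rel_mod_iff algebra_simps)
    have "scale (u * v * (t' * s')) (scale r m) = scale (u * r * t') (scale (v * s') m)"
      by (simp add: ac_simps)
    also have "\<dots> = scale (u * r' * t) (scale (v * s) m')" by (simp add: u v)
    also have "\<dots> = scale (u * v * (t * s)) (scale r' m')" by (simp add: ac_simps)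
    finally have "((scale r m, t * s), (scale r' m', t' * s')) \<in> loc_rel_mod scale S"
      using S t s uv by (auto simp: loc_rel_mod_iff mult_closed_def)
    with x show "x \<in> frac_mod scale S (scale r m) (t * s)"
      using frac_mod_eqI[OF S] by metis
  qed
qed

lemma loc_scale_frac_image_subset:
  assumes "mult_closed S" "t \<in> S"
  shows "loc_scale scale S (frac_ring S r t) ` loc_mod scale S \<subseteq> loc_mod scale S"
  using assms by (auto elim!: loc_mod_cases simp: loc_scale_frac frac_mod_in_loc_mod
      mult_closed_def)

lemma frac_in_W_loc_imp_W_set:
  assumes S: "mult_closed S" and a: "frac_ring S a 1 \<in> W_loc scale S"
  shows "a \<in> W_set scale"
proof (rule ccontr)
  assume "a \<notin> W_set scale"
  then have sur: "surj (scale a)" by (simp add: W_set_def)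
  have one: "1 \<in> S" using S by (simp add: mult_closed_def)
  have "loc_mod scale S \<subseteq> loc_scale scale S (frac_ring S a 1) ` loc_mod scale S"
  proof
    fix Y assume "Y \<in> loc_mod scale S"
    then obtain m s where s: "s \<in> S" and Y: "Y = frac_mod scale S m s"
      by (rule loc_mod_cases)
    obtain m' where "m = scale a m'" using sur by (metis UNIV_I imageE)
    then have "Y = loc_scale scale S (frac_ring S a 1) (frac_mod scale S m' s)"
      by (simp add: Y loc_scale_frac[OF S one s])
    with frac_mod_in_loc_mod[OF s]
    show "Y \<in> loc_scale scale S (frac_ring S a 1) ` loc_mod scale S" by blast
  qed
  with loc_scale_frac_image_subset[OF S one] a show False
    unfolding W_loc_def by blast
qed

lemma inj_scale_iff: "inj (scale w) \<longleftrightarrow> w \<notin> Z_set scale"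
proof
  show "inj (scale w) \<Longrightarrow> w \<notin> Z_set scale"
    unfolding Z_set_def by (auto dest: injD[where y = 0])
  show "w \<notin> Z_set scale \<Longrightarrow> inj (scale w)"
  proof (rule injI)
    fix x y assume "w \<notin> Z_set scale" "scale w x = scale w y"
    then have "scale w (x - y) = 0 \<and> w \<notin> Z_set scale" by (simp add: scale_right_diff_distrib)
    then have "x - y = 0" unfolding Z_set_def by blast
    then show "x = y" by simp
  qed
qed

lemma mem_range_scale_cancel:
  assumes "bij (scale w)" and "scale w m \<in> range (scale a)"
  shows "m \<in> range (scale a)"
proof -
  obtain x where x: "scale w m = scale a x" using assms(2) by blast
  obtain n where "x = scale w n" using assms(1) by (metis bij_pointE)
  then have "scale w m = scale w (scale a n)" by (simp add: x mult.commute)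
  then have "m = scale a n" using assms(1) by (meson bij_def injD)
  then show ?thesis by simp
qed

lemma frac_in_W_loc:
  assumes S: "mult_closed S" and Z: "Z_set scale \<inter> S = {}" and W: "W_set scale \<inter> S = {}"
    and a: "a \<in> W_set scale" and s: "s \<in> S"
  shows "frac_ring S a s \<in> W_loc scale S"
proof -
  have one: "1 \<in> S" using S by (simp add: mult_closed_def)
  obtain m where m: "m \<notin> range (scale a)" using a by (auto simp: W_set_def)
  have "frac_mod scale S m 1 \<notin> loc_scale scale S (frac_ring S a s) ` loc_mod scale S"
  proof
    assume "frac_mod scale S m 1 \<in> loc_scale scale S (frac_ring S a s) ` loc_mod scale S"
    then obtain m' t where t: "t \<in> S"
      and "frac_mod scale S m 1 = frac_mod scale S (scale a m') (s * t)"
      by (auto elim!: loc_mod_cases simp: loc_scale_frac[OF S s])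
    with mem_frac_mod_self[OF S one]
    have "((scale a m', s * t), (m, 1)) \<in> loc_rel_mod scale S"
      unfolding frac_mod_def by (metis Image_singleton_iff)
    then obtain u where u: "u \<in> S" and "scale u (scale a m') = scale (u * (s * t)) m"
      by (auto simp: loc_rel_mod_iff)
    then have "scale (u * s * t) m \<in> range (scale a)"
      by (metis mult.assoc rangeI scale_left_commute)
    moreover have "u * s * t \<in> S" using S u s t by (simp add: mult_closed_def)
    then have "bij (scale (u * s * t))"
      using Z W by (auto simp: bij_def inj_scale_iff W_set_def)
    ultimately show False using m mem_range_scale_cancel by blast
  qed
  then show ?thesis
    using frac_mod_in_loc_mod[OF one] frac_ring_in_loc_ring[OF s] unfolding W_loc_def by auto
qed

lemma hopfian_Z_set_subset_W_set:
  assumes "hopfian scale"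
  shows "Z_set scale \<subseteq> W_set scale"
proof
  fix w assume "w \<in> Z_set scale"
  then have "\<not> inj (scale w)" by (simp add: inj_scale_iff)
  then show "w \<in> W_set scale"
    using assms module_hom_scale_self unfolding hopfian_def W_set_def by blast
qed

end

theorem lemma2p9:
  fixes scale :: "'a::comm_ring_1 \<Rightarrow> 'b::ab_group_add \<Rightarrow> 'b"
    and S I :: "'a set"
  assumes M: "module scale"
    and S: "mult_closed S"
    and I: "is_ideal I"
  shows "(loc_ideal S I \<subseteq> W_loc scale S \<longrightarrow> I \<subseteq> W_set scale)
       \<and> (Z_set scale \<inter> S = {} \<and> W_set scale \<inter> S = {} \<and> I \<subseteq> W_set scale
           \<longrightarrow> loc_ideal S I \<subseteq> W_loc scale S)
       \<and> (hopfian scale \<and> W_set scale \<inter> S = {} \<and> I \<subseteq> W_set scale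
           \<longrightarrow> loc_ideal S I \<subseteq> W_loc scale S)"
proof -
  have one: "1 \<in> S" using S by (simp add: mult_closed_def)
  have a: "loc_ideal S I \<subseteq> W_loc scale S \<longrightarrow> I \<subseteq> W_set scale"
    using module.frac_in_W_loc_imp_W_set[OF M S] one unfolding loc_ideal_def by blast
  have b: "loc_ideal S I \<subseteq> W_loc scale S"
    if "Z_set scale \<inter> S = {}" "W_set scale \<inter> S = {}" "I \<subseteq> W_set scale"
    using module.frac_in_W_loc[OF M S that(1,2)] that(3) unfolding loc_ideal_def by blast
  have "Z_set scale \<inter> S = {}" if "hopfian scale" "W_set scale \<inter> S = {}"
    using module.hopfian_Z_set_subset_W_set[OF M that(1)] that(2) by blast
  with a b show ?thesis by blast
qed

end
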